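(* Let $n\ge 3$ be odd and $r\ge 1$. Let $w_r^n$ be any closed Eulerian trail of the graph $G_r^n$. Then $B_{w_r^n}$ belongs to the Graver basis of $I_{G_r^n}$ (i.e. it is primitive), and $$\deg(B_{w_r^n})=\frac{1}{2}\left(n+n^2\,\frac{(n-1)^r-1}{n-2}\right).$$
   Context: Graphs $G_r^n$: for an odd integer $n\ge3$, $G_0^n$ is a cycle of length $n$; for $r\ge1$, $G_r^n$ is obtained from $G_{r-1}^n$ by attaching, at each vertex $v$ of degree two in $G_{r-1}^n$, a new cycle of length $n$ that shares exactly the vertex $v$ with $G_{r-1}^n$ (the new cycles are otherwise pairwise vertex-disjoint and disjoint from $G_{r-1}^n$). Every vertex of $G_r^n$ has even degree, so $G_r^n$ has closed Eulerian trails (closed walks using every edge exactly once). For a graph $G$ with edges $e_1,\dots,e_m$, the toric ideal $I_G\subseteq\mathbb{K}[e_1,\dots,e_m]$ is the toric ideal of $A_G=\{\mathbf v_i+\mathbf v_j : \{v_i,v_j\}\in E(G)\}\subseteq\mathbb{Z}^{|V(G)|}$, i.e. the ideal generated by all binomials $\mathbf{e}^{\mathbf u}-\mathbf{e}^{\mathbf v}$ with $\sum_k u_k a_{e_k}=\sum_k v_k a_{e_k}$. For an even closed walk $w=(e_{i_1},\dots,e_{i_{2q}})$ define $B_w=\prod_{k=1}^q e_{i_{2k-1}}-\prod_{k=1}^q e_{i_{2k}}\in I_G$; its degree is $q$. A nonzero binomial $\mathbf{x}^{\mathbf u}-\mathbf{x}^{\mathbf v}$ in a toric ideal is primitive if there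 is no other binomial $\mathbf{x}^{\mathbf w}-\mathbf{x}^{\mathbf z}$ in the ideal with $\mathbf{x}^{\mathbf w}\mid\mathbf{x}^{\mathbf u}$ and $\mathbf{x}^{\mathbf z}\mid\mathbf{x}^{\mathbf v}$; the Graver basis is the set of primitive binomials. *)

theory Defs
  imports Complex_Main "HOL-Library.Multiset"
begin

text \<open>A new n-cycle attached at vertex v has vertices
  v (position 0) and v@[j] for 1 <= j <= n-1 (fresh), with edges between
  consecutive positions modulo n.\<close>

definition cyc_vertex :: "nat list \<Rightarrow> nat \<Rightarrow> nat list" where
  "cyc_vertex v j = (if j = 0 then v else v @ [j])"

definition attach_cycle :: "nat \<Rightarrow> nat list \<Rightarrow> nat list set set" where
  "attach_cycle n v =
     (\<lambda>j. {cyc_vertex v j, cyc_vertex v ((j + 1) mod n)}) ` {..<n}"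

definition vdegree :: "'a set set \<Rightarrow> 'a \<Rightarrow> nat" where
  "vdegree E v = card {e \<in> E. v \<in> e}"

fun G_edges :: "nat \<Rightarrow> nat \<Rightarrow> nat list set set" where
  "G_edges n 0 = (\<lambda>j. {[j], [(j + 1) mod n]}) ` {..<n}"
| "G_edges n (Suc r) =
     G_edges n r \<union>
     \<Union> (attach_cycle n ` {v \<in> \<Union> (G_edges n r). vdegree (G_edges n r) v = 2})"

text \<open>A closed walk is given by its cyclic vertex sequence xs = [x_0,...,x_{m-1}];
  its i-th edge (0-based) is {x_i, x_{(i+1) mod m}}.\<close>

definition walk_edges :: "'a list \<Rightarrow> 'a set list" where
  "walk_edges xs = map (\<lambda>i. {xs ! i, xs ! ((i + 1) mod length xs)}) [0..<length xs]"

definition closed_eulerian_trail :: "'a set set \<Rightarrow> 'a list \<Rightarrow> bool" where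
  "closed_eulerian_trail E xs \<longleftrightarrow>
     xs \<noteq> [] \<and> distinct (walk_edges xs) \<and> set (walk_edges xs) = E"

text \<open>Monomials in the edge variables are multisets of edges. B_w = B_pos - B_neg,
  where B_pos is the product of the edges in odd positions (1-based), B_neg of those
  in even positions.\<close>

definition Bw_pos :: "'a list \<Rightarrow> 'a set multiset" where
  "Bw_pos xs = mset (map (\<lambda>i. walk_edges xs ! i) (filter even [0..<length xs]))"

definition Bw_neg :: "'a list \<Rightarrow> 'a set multiset" where
  "Bw_neg xs = mset (map (\<lambda>i. walk_edges xs ! i) (filter odd [0..<length xs]))"

definition binomial_degree :: "'a list \<Rightarrow> nat" where
  "binomial_degree xs = size (Bw_pos xs)"

text \<open>The column of A_G for edge {v_i,v_j} is v_i + v_j, so A_G applied to the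
  exponent vector of a monomial u gives, at vertex x, the number of edges of u
  (with multiplicity) incident with x. The binomial x^u - x^v lies in I_G iff
  A_G u = A_G v.\<close>

definition in_toric_ideal :: "'a set set \<Rightarrow> 'a set multiset \<Rightarrow> 'a set multiset \<Rightarrow> bool" where
  "in_toric_ideal E u v \<longleftrightarrow>
     set_mset u \<subseteq> E \<and> set_mset v \<subseteq> E \<and>
     (\<forall>x. size (filter_mset (\<lambda>e. x \<in> e) u) = size (filter_mset (\<lambda>e. x \<in> e) v))"

definition primitive_binomial :: "'a set set \<Rightarrow> 'a set multiset \<Rightarrow> 'a set multiset \<Rightarrow> bool" where
  "primitive_binomial E u v \<longleftrightarrow>
     u \<noteq> v \<and> in_toric_ideal E u v \<and>
     \<not> (\<exists>w z. w \<noteq> z \<and> in_toric_ideal E w z \<and> (w, z) \<noteq> (u, v) \<and> w \<subseteq># u \<and> z \<subseteq># v)"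

end

theory Submission
  imports Defs
begin

text \<open>The alternate edges of an Eulerian trail split the edge set into \<open>P \<union> N\<close>, with equal
  \<open>P\<close>- and \<open>N\<close>-degree at every vertex, and \<open>B_w\<close> is the squarefree binomial with terms \<open>P\<close>
  and \<open>N\<close>. A binomial dividing it comes from \<open>W \<subseteq> P\<close>, \<open>Z \<subseteq> N\<close> with equal degrees everywhere,
  and as \<open>G_r^n\<close> is connected it suffices that \<open>W \<union> Z\<close> contains none or all of the edges at
  each vertex. At a vertex of degree 2 this is immediate. A vertex \<open>x\<close> of degree 4 cuts off the
  branch \<open>T\<close> of cycles hanging at \<open>x\<close>, which has an odd number \<open>n (1 + (n-1) + \<dots>)\<close> of edges.
  Summing degrees over \<open>T\<close>, \<open>2 |P \<inter> T| - 2 |N \<inter> T|\<close> is the difference of the \<open>P\<close>- and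
  \<open>N\<close>-degrees of \<open>T\<close> at \<open>x\<close>, so the two edges of \<open>T\<close> at \<open>x\<close> lie in the same class; the same
  count for \<open>W\<close> and \<open>Z\<close> then shows that \<open>W\<close> contains 0 or 2 of the two edges of \<open>P\<close> at \<open>x\<close>.
  The degree is half the number \<open>n + n\<^sup>2 (1 + (n-1) + \<dots> + (n-1)\<^bsup>r-1\<^esup>)\<close> of edges.\<close>

section \<open>Degrees of edge sets\<close>

lemma sum_vdegree:
  assumes "finite V" "finite X" "\<Union>X \<subseteq> V"
  shows "(\<Sum>x\<in>V. vdegree X x) = (\<Sum>e\<in>X. card e)"
proof -
  have "(\<Sum>x\<in>V. vdegree X x) = (\<Sum>x\<in>V. \<Sum>e\<in>X. of_bool (x \<in> e))"
    using assms(2) by (simp add: vdegree_def Int_def conj_commute)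
  also have "\<dots> = (\<Sum>e\<in>X. \<Sum>x\<in>V. of_bool (x \<in> e))"
    by (rule sum.swap)
  also have "\<dots> = (\<Sum>e\<in>X. card e)"
  proof (rule sum.cong)
    fix e assume "e \<in> X"
    then have "V \<inter> {x. x \<in> e} = e" using assms(3) by blast
    then show "(\<Sum>x\<in>V. of_bool (x \<in> e)) = card e" using assms(1) by simp
  qed simp
  finally show ?thesis .
qed

lemma vdegree_Un_disjoint:
  assumes "finite A" "finite B" "A \<inter> B = {}"
  shows "vdegree (A \<union> B) x = vdegree A x + vdegree B x"
proof -
  have "{e \<in> A \<union> B. x \<in> e} = {e \<in> A. x \<in> e} \<union> {e \<in> B. x \<in> e}" by blast
  then show ?thesis using assms by (simp add: vdegree_def card_Un_disjoint disjoint_iff)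
qed

lemma vdegree_diff_eq_card_diff:
  assumes "finite E" "\<forall>e\<in>E. card e = 2" "X \<subseteq> E" "Y \<subseteq> E"
    and "\<forall>x. x \<noteq> v \<longrightarrow> vdegree X x = vdegree Y x"
  shows "int (vdegree X v) - int (vdegree Y v) = 2 * int (card X) - 2 * int (card Y)"
proof -
  define V where "V = insert v (\<Union>E)"
  define d where "d x = int (vdegree X x) - int (vdegree Y x)" for x
  have finV: "finite V"
    using assms(1,2) unfolding V_def by (metis card.infinite finite_Union finite_insert zero_neq_numeral)
  have finXY: "finite X" "finite Y" using assms(1,3,4) finite_subset by blast+
  have card_sum: "(\<Sum>e\<in>S. card e) = 2 * card S" if "S \<subseteq> E" for S
    using that assms(2) by (simp add: subset_iff)
  have "\<Union>X \<subseteq> V" "\<Union>Y \<subseteq> V" using assms(3,4) by (auto simp: V_def)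
  then have "(\<Sum>x\<in>V. d x) = 2 * int (card X) - 2 * int (card Y)"
    using sum_vdegree[OF finV finXY(1)] sum_vdegree[OF finV finXY(2)] card_sum assms(3,4)
    by (simp add: d_def sum_subtractf flip: of_nat_sum)
  moreover have "(\<Sum>x\<in>V. d x) = d v + (\<Sum>x\<in>V - {v}. d x)"
    using finV by (simp add: V_def sum.insert_remove)
  moreover have "(\<Sum>x\<in>V - {v}. d x) = 0"
    using assms(5) by (intro sum.neutral) (simp add: d_def)
  ultimately show ?thesis by (simp add: d_def)
qed

text \<open>Closedness of \<open>T\<close> away from \<open>v\<close> keeps \<open>X \<inter> T\<close> and \<open>Y \<inter> T\<close> balanced away from \<open>v\<close>.\<close>

lemma vdegree_diff_on_branch:
  assumes "finite E" "\<forall>e\<in>E. card e = 2" "X \<subseteq> E" "Y \<subseteq> E"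
    and bal: "\<forall>x. vdegree X x = vdegree Y x"
    and closed: "\<And>x e e'. x \<noteq> v \<Longrightarrow> e \<in> T \<Longrightarrow> x \<in> e \<Longrightarrow> e' \<in> E \<Longrightarrow> x \<in> e' \<Longrightarrow> e' \<in> T"
  shows "int (vdegree (X \<inter> T) v) - int (vdegree (Y \<inter> T) v)
    = 2 * int (card (X \<inter> T)) - 2 * int (card (Y \<inter> T))"
proof (rule vdegree_diff_eq_card_diff[OF assms(1,2)])
  show "X \<inter> T \<subseteq> E" "Y \<inter> T \<subseteq> E" using assms(3,4) by blast+
  show "\<forall>x. x \<noteq> v \<longrightarrow> vdegree (X \<inter> T) x = vdegree (Y \<inter> T) x"
  proof (intro allI impI)
    fix x assume "x \<noteq> v"
    show "vdegree (X \<inter> T) x = vdegree (Y \<inter> T) x"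
    proof (cases "\<exists>e\<in>T. x \<in> e")
      case True
      then have "{e \<in> X \<inter> T. x \<in> e} = {e \<in> X. x \<in> e}" "{e \<in> Y \<inter> T. x \<in> e} = {e \<in> Y. x \<in> e}"
        using closed \<open>x \<noteq> v\<close> assms(3,4) by blast+
      then show ?thesis using bal unfolding vdegree_def by simp
    next
      case False
      then have "{e \<in> X \<inter> T. x \<in> e} = {}" "{e \<in> Y \<inter> T. x \<in> e} = {}" by blast+
      then show ?thesis unfolding vdegree_def by (simp only: card.empty)
    qed
  qed
qed

section \<open>Alternate edges of a closed walk\<close>

lemma length_walk_edges [simp]: "length (walk_edges xs) = length xs"
  by (simp add: walk_edges_def)

lemma nth_walk_edges:
  "i < length xs \<Longrightarrow> walk_edges xs ! i = {xs ! i, xs ! ((i + 1) mod length xs)}"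
  by (simp add: walk_edges_def)

lemma binomial_degree_eq: "binomial_degree xs = (length xs + 1) div 2"
proof -
  have "length (filter even [0..<m]) = (m + 1) div 2" for m :: nat
    by (induction m) auto
  then show ?thesis unfolding binomial_degree_def Bw_pos_def size_mset length_map .
qed

definition alternate_edges :: "'a list \<Rightarrow> bool \<Rightarrow> 'a set set" where
  "alternate_edges xs p = (\<lambda>i. walk_edges xs ! i) ` {i. i < length xs \<and> even i = p}"

lemma alternate_edges_Un:
  "alternate_edges xs True \<union> alternate_edges xs False = set (walk_edges xs)"
proof -
  have "{..<length xs} = {i. i < length xs \<and> even i = True} \<union> {i. i < length xs \<and> even i = False}"
    by auto
  moreover have "set (walk_edges xs) = (\<lambda>i. walk_edges xs ! i) ` {..<length xs}"
    by (auto simp: in_set_conv_nth)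
  ultimately show ?thesis unfolding alternate_edges_def by (metis image_Un)
qed

lemma alternate_edges_disjoint:
  assumes "distinct (walk_edges xs)"
  shows "alternate_edges xs True \<inter> alternate_edges xs False = {}"
  using assms by (auto simp: alternate_edges_def nth_eq_iff_index_eq)

lemma mset_alternate_edges:
  assumes "distinct (walk_edges xs)"
  shows "mset (map (\<lambda>i. walk_edges xs ! i) (filter (\<lambda>i. even i = p) [0..<length xs]))
    = mset_set (alternate_edges xs p)"
proof -
  let ?ys = "map (\<lambda>i. walk_edges xs ! i) (filter (\<lambda>i. even i = p) [0..<length xs])"
  have "distinct ?ys"
    using assms by (auto simp: distinct_map inj_on_def nth_eq_iff_index_eq)
  moreover have "set ?ys = alternate_edges xs p"
    by (auto simp: alternate_edges_def)
  ultimately show ?thesis by (metis mset_set_set)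
qed

lemma Bw_pos_eq: "distinct (walk_edges xs) \<Longrightarrow> Bw_pos xs = mset_set (alternate_edges xs True)"
  using mset_alternate_edges[of xs True] by (simp add: Bw_pos_def)

lemma Bw_neg_eq: "distinct (walk_edges xs) \<Longrightarrow> Bw_neg xs = mset_set (alternate_edges xs False)"
  using mset_alternate_edges[of xs False] by (simp add: Bw_neg_def)

lemma vdegree_alternate_edges:
  assumes "distinct (walk_edges xs)"
  shows "vdegree (alternate_edges xs p) x
    = card {i. i < length xs \<and> even i = p \<and> x \<in> walk_edges xs ! i}"
proof -
  have "{e \<in> alternate_edges xs p. x \<in> e}
      = (\<lambda>i. walk_edges xs ! i) ` {i. i < length xs \<and> even i = p \<and> x \<in> walk_edges xs ! i}"
    by (auto simp: alternate_edges_def)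
  moreover have "inj_on (\<lambda>i. walk_edges xs ! i) {i. i < length xs \<and> even i = p \<and> x \<in> walk_edges xs ! i}"
    using assms by (auto simp: inj_on_def nth_eq_iff_index_eq)
  ultimately show ?thesis by (simp add: vdegree_def card_image)
qed

lemma Suc_mod_if_less: "j < n \<Longrightarrow> Suc j mod n = (if Suc j = n then 0 else Suc j)"
  by (simp add: mod_Suc)

text \<open>On a cycle of even length, the successor map flips the parity of positions.\<close>

lemma card_parity_shift:
  assumes "even (m :: nat)"
  shows "card {i. i < m \<and> even i = p \<and> Q ((i + 1) mod m)} = card {k. k < m \<and> even k = (\<not> p) \<and> Q k}"
proof -
  let ?f = "\<lambda>i. (i + 1) mod m"
  let ?A = "{i. i < m \<and> even i = p \<and> Q ((i + 1) mod m)}"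
  let ?B = "{k. k < m \<and> even k = (\<not> p) \<and> Q k}"
  have inj: "inj_on ?f ?A"
    by (rule inj_onI) (auto simp: Suc_mod_if_less split: if_splits)
  have "?f ` ?A = ?B"
  proof
    show "?f ` ?A \<subseteq> ?B"
      using assms by (auto simp: Suc_mod_if_less)
    show "?B \<subseteq> ?f ` ?A"
    proof
      fix k assume k: "k \<in> ?B"
      define i where "i = (if k = 0 then m - 1 else k - 1)"
      have "i \<in> ?A" "k = ?f i"
        using k assms by (auto simp: i_def Suc_mod_if_less)
      then show "k \<in> ?f ` ?A" by blast
    qed
  qed
  then show ?thesis using card_image[OF inj] by simp
qed

lemma vdegree_alternate_edges_eq:
  assumes "distinct (walk_edges xs)" "even (length xs)" "\<forall>e\<in>set (walk_edges xs). card e = 2"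
  shows "vdegree (alternate_edges xs True) x = vdegree (alternate_edges xs False) x"
proof -
  let ?m = "length xs"
  have no_loop: "xs ! ((i + 1) mod ?m) \<noteq> xs ! i" if "i < ?m" for i
  proof
    assume "xs ! ((i + 1) mod ?m) = xs ! i"
    then have "card (walk_edges xs ! i) = 1" using that by (simp add: nth_walk_edges)
    moreover have "walk_edges xs ! i \<in> set (walk_edges xs)" using that by simp
    ultimately show False using assms(3) by fastforce
  qed
  have "card {i. i < ?m \<and> even i = p \<and> x \<in> walk_edges xs ! i}
      = card {i. i < ?m \<and> even i = p \<and> xs ! i = x} + card {i. i < ?m \<and> even i = (\<not> p) \<and> xs ! i = x}"
    for p
  proof -
    have "{i. i < ?m \<and> even i = p \<and> x \<in> walk_edges xs ! i}
        = {i. i < ?m \<and> even i = p \<and> xs ! i = x} \<union> {i. i < ?m \<and> even i = p \<and> xs ! ((i + 1) mod ?m) = x}"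
      by (auto simp: nth_walk_edges)
    moreover have "{i. i < ?m \<and> even i = p \<and> xs ! i = x}
        \<inter> {i. i < ?m \<and> even i = p \<and> xs ! ((i + 1) mod ?m) = x} = {}"
      using no_loop by auto
    ultimately show ?thesis
      using card_parity_shift[OF assms(2), of p "\<lambda>k. xs ! k = x"] by (simp add: card_Un_disjoint)
  qed
  from this[of True] this[of False] show ?thesis
    by (simp add: vdegree_alternate_edges[OF assms(1)])
qed

section \<open>Squarefree primitive binomials\<close>

lemma subset_mset_mset_setD:
  assumes "finite A" "M \<subseteq># mset_set A"
  shows "M = mset_set (set_mset M)" "set_mset M \<subseteq> A"
proof -
  show "set_mset M \<subseteq> A"
    using assms by (metis finite_set_mset_mset_set set_mset_mono)
  show "M = mset_set (set_mset M)"
  proof (rule multiset_eqI)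
    fix e
    have "count M e \<le> 1"
      using assms mset_subset_eq_count[OF assms(2), of e] by (auto simp: count_mset_set' split: if_splits)
    then show "count M e = count (mset_set (set_mset M)) e"
      using count_eq_zero_iff[of M e] by (auto simp: count_mset_set')
  qed
qed

lemma in_toric_ideal_mset_set:
  assumes "finite A" "finite B"
  shows "in_toric_ideal E (mset_set A) (mset_set B) \<longleftrightarrow>
    A \<subseteq> E \<and> B \<subseteq> E \<and> (\<forall>x. vdegree A x = vdegree B x)"
  using assms by (simp add: in_toric_ideal_def vdegree_def)

lemma primitive_binomial_mset_setI:
  assumes fin: "finite E" and PN: "P \<union> N = E" "P \<inter> N = {}" "P \<noteq> {}"
    and bal: "\<forall>x. vdegree P x = vdegree N x"
    and minimal: "\<And>W Z. W \<subseteq> P \<Longrightarrow> Z \<subseteq> N \<Longrightarrow> \<forall>x. vdegree W x = vdegree Z x \<Longrightarrow>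
      W \<union> Z = {} \<or> W \<union> Z = E"
  shows "primitive_binomial E (mset_set P) (mset_set N)"
proof -
  have finPN: "finite P" "finite N" using fin PN(1) by auto
  have "mset_set P \<noteq> mset_set N"
    using finPN PN(2,3) by (metis finite_set_mset_mset_set inf.idem)
  moreover have "in_toric_ideal E (mset_set P) (mset_set N)"
    using finPN PN(1) bal by (auto simp: in_toric_ideal_mset_set)
  moreover have False
    if ab: "a \<noteq> b" "in_toric_ideal E a b" "(a, b) \<noteq> (mset_set P, mset_set N)"
      "a \<subseteq># mset_set P" "b \<subseteq># mset_set N" for a b
  proof -
    define W Z where "W = set_mset a" and "Z = set_mset b"
    have a: "a = mset_set W" "W \<subseteq> P" and b: "b = mset_set Z" "Z \<subseteq> N"
      using subset_mset_mset_setD[OF finPN(1) ab(4)] subset_mset_mset_setD[OF finPN(2) ab(5)]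
      unfolding W_def Z_def by blast+
    have "in_toric_ideal E (mset_set W) (mset_set Z)"
      using ab(2) a(1) b(1) by simp
    then have "\<forall>x. vdegree W x = vdegree Z x"
      by (simp add: in_toric_ideal_mset_set W_def Z_def)
    then consider "W \<union> Z = {}" | "W \<union> Z = E" using minimal a(2) b(2) by blast
    then show False
    proof cases
      case 1
      then show False using ab(1) a(1) b(1) by simp
    next
      case 2
      then have "W = P" "Z = N" using a(2) b(2) PN(1,2) by blast+
      then show False using ab(3) a(1) b(1) by simp
    qed
  qed
  ultimately show ?thesis unfolding primitive_binomial_def by blast
qed

section \<open>The graphs G_r^n\<close>

text \<open>Vertex \<open>u @ [j]\<close> is position \<open>j\<close> on the cycle attached at \<open>u\<close>, whose position 0 is \<open>u\<close>
  itself; the base cycle is the one attached at \<open>[]\<close>, with positions \<open>[0], \<dots>, [n - 1]\<close>.\<close>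

definition cycle_vertex :: "nat list \<Rightarrow> nat \<Rightarrow> nat list" where
  "cycle_vertex u j = (if u \<noteq> [] \<and> j = 0 then u else u @ [j])"

definition cycle_edge :: "nat \<Rightarrow> nat list \<times> nat \<Rightarrow> nat list set" where
  "cycle_edge n p = {cycle_vertex (fst p) (snd p), cycle_vertex (fst p) ((snd p + 1) mod n)}"

definition is_address :: "nat \<Rightarrow> nat list \<Rightarrow> bool" where
  "is_address n u \<longleftrightarrow> u = [] \<or> (hd u < n \<and> (\<forall>x\<in>set (tl u). 0 < x \<and> x < n))"

definition cycle_roots :: "nat \<Rightarrow> nat \<Rightarrow> nat list set" where
  "cycle_roots n r = {u. is_address n u \<and> length u \<le> r}"

definition edge_labels :: "nat \<Rightarrow> nat \<Rightarrow> (nat list \<times> nat) set" where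
  "edge_labels n r = cycle_roots n r \<times> {..<n}"

lemma cycle_vertex_eq_iff:
  "cycle_vertex u j = v \<longleftrightarrow> (u \<noteq> [] \<and> j = 0 \<and> v = u) \<or> ((u = [] \<or> j \<noteq> 0) \<and> v = u @ [j])"
  by (auto simp: cycle_vertex_def)

lemma cycle_vertex_inj: "cycle_vertex u j = cycle_vertex u k \<Longrightarrow> j = k"
  by (auto simp: cycle_vertex_def split: if_splits)

lemma mem_cycle_edge:
  "v \<in> cycle_edge n (u, j) \<longleftrightarrow> v = cycle_vertex u j \<or> v = cycle_vertex u ((j + 1) mod n)"
  by (simp add: cycle_edge_def)

lemma card_cycle_edge:
  assumes "n \<ge> 2" "j < n"
  shows "card (cycle_edge n (u, j)) = 2"
proof -
  have "j \<noteq> (j + 1) mod n" using assms by (simp add: Suc_mod_if_less)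
  then have "cycle_vertex u j \<noteq> cycle_vertex u ((j + 1) mod n)" using cycle_vertex_inj by metis
  then show ?thesis by (simp add: cycle_edge_def)
qed

lemma cycle_edge_vertex_length:
  "y \<in> cycle_edge n (u, j) \<Longrightarrow>
    length y \<le> length u + 1 \<and> (length y = length u + 1 \<longrightarrow> butlast y = u)"
  by (auto simp: cycle_edge_def cycle_vertex_def)

lemma cycle_edge_has_child:
  assumes "n \<ge> 2" "j < n"
  shows "\<exists>y\<in>cycle_edge n (u, j). length y = length u + 1"
proof (cases "u = [] \<or> j \<noteq> 0")
  case True
  then show ?thesis by (auto simp: cycle_edge_def cycle_vertex_def)
next
  case False
  then have "(j + 1) mod n = 1" using assms by simp
  then show ?thesis by (auto simp: cycle_edge_def cycle_vertex_def)
qed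

text \<open>The label is recovered from the edge: its root is the parent of its longer end.\<close>

lemma inj_on_cycle_edge:
  assumes "n \<ge> 3"
  shows "inj_on (cycle_edge n) (UNIV \<times> {..<n})"
proof (rule inj_onI)
  fix p q assume "p \<in> UNIV \<times> {..<n}" "q \<in> UNIV \<times> {..<n}" and e: "cycle_edge n p = cycle_edge n q"
  then obtain u j u' j' where pq: "p = (u, j)" "q = (u', j')" and j: "j < n" "j' < n"
    by auto
  obtain y where y: "y \<in> cycle_edge n (u, j)" "length y = length u + 1"
    using cycle_edge_has_child[of n j u] j assms by auto
  obtain y' where y': "y' \<in> cycle_edge n (u', j')" "length y' = length u' + 1"
    using cycle_edge_has_child[of n j' u'] j assms by auto
  have e': "cycle_edge n (u, j) = cycle_edge n (u', j')" using e pq by simp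
  have yu': "y \<in> cycle_edge n (u', j')" and y'u: "y' \<in> cycle_edge n (u, j)"
    using y(1) y'(1) e' by blast+
  have "length u = length u'"
    using cycle_edge_vertex_length[OF yu'] cycle_edge_vertex_length[OF y'u] y(2) y'(2) by simp
  then have u: "u = u'"
    using cycle_edge_vertex_length[OF yu'] cycle_edge_vertex_length[OF y(1)] y(2) by simp
  then have "{cycle_vertex u j, cycle_vertex u ((j + 1) mod n)} = {cycle_vertex u j', cycle_vertex u ((j' + 1) mod n)}"
    using e' by (simp add: cycle_edge_def)
  then have "(j = j' \<and> (j + 1) mod n = (j' + 1) mod n) \<or> (j = (j' + 1) mod n \<and> (j + 1) mod n = j')"
    by (auto simp: doubleton_eq_iff dest: cycle_vertex_inj)
  then have "j = j'" using j assms by (auto simp: Suc_mod_if_less split: if_splits)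
  then show "p = q" using pq u by simp
qed

lemma is_address_snoc:
  "is_address n (u @ [j]) \<longleftrightarrow> is_address n u \<and> j < n \<and> (u \<noteq> [] \<longrightarrow> 0 < j)"
  by (cases u) (auto simp: is_address_def)

lemma is_address_singleton [simp]: "is_address n [k] \<longleftrightarrow> k < n"
  by (simp add: is_address_def)

lemma is_address_butlast:
  assumes "v \<noteq> []"
  shows "is_address n v \<longleftrightarrow>
    is_address n (butlast v) \<and> last v < n \<and> (butlast v \<noteq> [] \<longrightarrow> 0 < last v)"
  by (metis assms append_butlast_last_id is_address_snoc)

lemma is_address_append:
  "v \<noteq> [] \<Longrightarrow> is_address n (v @ s) \<longleftrightarrow> is_address n v \<and> set s \<subseteq> {1..<n}"
  by (cases v) (auto simp: is_address_def Suc_le_eq)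

lemma is_address_Cons: "is_address n (a # s) \<longleftrightarrow> a < n \<and> set s \<subseteq> {1..<n}"
  by (auto simp: is_address_def)

lemma finite_cycle_roots: "finite (cycle_roots n r)"
proof (rule finite_subset)
  show "cycle_roots n r \<subseteq> {xs. set xs \<subseteq> {..<n} \<and> length xs \<le> r}"
  proof
    fix u assume "u \<in> cycle_roots n r"
    then show "u \<in> {xs. set xs \<subseteq> {..<n} \<and> length xs \<le> r}"
      by (cases u) (auto simp: cycle_roots_def is_address_def)
  qed
qed (simp add: finite_lists_length_le)

lemma finite_edge_labels: "finite (edge_labels n r)"
  by (simp add: edge_labels_def finite_cycle_roots)

text \<open>A vertex \<open>v\<close> lies on the cycle attached at \<open>butlast v\<close>, and on the one attached at \<open>v\<close>
  itself if that exists.\<close>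

lemma edge_labels_at_vertex:
  assumes n: "n \<ge> 3" and v: "is_address n v" "v \<noteq> []" "length v \<le> r + 1"
  shows "{i \<in> edge_labels n r. v \<in> cycle_edge n i} =
    (if length v \<le> r then {(v, 0), (v, n - 1)} else {}) \<union>
    {(butlast v, last v), (butlast v, (last v + n - 1) mod n)}"
  (is "?L = ?R")
proof
  have vv: "v = butlast v @ [last v]" using v by simp
  have ob: "is_address n (butlast v)" "last v < n" "butlast v \<noteq> [] \<Longrightarrow> 0 < last v"
    using is_address_butlast[of v n] v by auto
  show "?L \<subseteq> ?R"
  proof
    fix i assume "i \<in> ?L"
    then obtain u j where i: "i = (u, j)" "u \<in> cycle_roots n r" "j < n" "v \<in> cycle_edge n (u, j)"
      by (auto simp: edge_labels_def)
    have lu: "length u \<le> r" using i by (simp add: cycle_roots_def)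
    from i(4) consider "cycle_vertex u j = v" | "cycle_vertex u ((j + 1) mod n) = v"
      by (auto simp: mem_cycle_edge)
    then show "i \<in> ?R"
    proof cases
      case 1
      then show ?thesis using i lu by (auto simp: cycle_vertex_eq_iff)
    next
      case 2
      then show ?thesis using i lu n by (auto simp: cycle_vertex_eq_iff Suc_mod_if_less split: if_splits)
    qed
  qed
  show "?R \<subseteq> ?L"
  proof -
    have "length (butlast v) \<le> r" using v by simp
    then have "(butlast v, last v) \<in> ?L"
      using ob vv by (auto simp: edge_labels_def cycle_roots_def mem_cycle_edge cycle_vertex_def)
    moreover have "((last v + n - 1) mod n + 1) mod n = last v"
      using ob(2) n by (cases "last v") (auto simp: Suc_mod_if_less)
    then have "(butlast v, (last v + n - 1) mod n) \<in> ?L"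
      using ob vv n \<open>length (butlast v) \<le> r\<close>
      by (auto simp: edge_labels_def cycle_roots_def mem_cycle_edge cycle_vertex_def)
    moreover have "(v, 0) \<in> ?L" "(v, n - 1) \<in> ?L" if "length v \<le> r"
      using that v n by (auto simp: edge_labels_def cycle_roots_def mem_cycle_edge cycle_vertex_def)
    ultimately show ?thesis by auto
  qed
qed

lemma vertex_of_cycle_edges_iff:
  assumes n: "n \<ge> 3"
  shows "(\<exists>i\<in>edge_labels n r. v \<in> cycle_edge n i) \<longleftrightarrow> is_address n v \<and> v \<noteq> [] \<and> length v \<le> r + 1"
proof
  assume "\<exists>i\<in>edge_labels n r. v \<in> cycle_edge n i"
  then obtain u j where i: "u \<in> cycle_roots n r" "j < n" "v \<in> cycle_edge n (u, j)"
    by (auto simp: edge_labels_def)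
  then obtain k where "k < n" "cycle_vertex u k = v"
    using n by (metis mem_cycle_edge mod_less_divisor not_gr_zero not_numeral_le_zero)
  then show "is_address n v \<and> v \<noteq> [] \<and> length v \<le> r + 1"
    using i by (auto simp: cycle_vertex_eq_iff cycle_roots_def is_address_snoc)
next
  assume "is_address n v \<and> v \<noteq> [] \<and> length v \<le> r + 1"
  then show "\<exists>i\<in>edge_labels n r. v \<in> cycle_edge n i"
    using edge_labels_at_vertex[OF n] by blast
qed

lemma vdegree_cycle_edges:
  assumes n: "n \<ge> 3" and v: "is_address n v" "v \<noteq> []" "length v \<le> r + 1"
  shows "vdegree (cycle_edge n ` edge_labels n r) v = (if length v \<le> r then 4 else 2)"
proof -
  have "{e \<in> cycle_edge n ` edge_labels n r. v \<in> e} = cycle_edge n ` {i \<in> edge_labels n r. v \<in> cycle_edge n i}"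
    by blast
  moreover have "inj_on (cycle_edge n) {i \<in> edge_labels n r. v \<in> cycle_edge n i}"
    by (rule inj_on_subset[OF inj_on_cycle_edge[OF n]]) (auto simp: edge_labels_def)
  moreover have "butlast v \<noteq> v"
    using v(2) by (cases v rule: rev_cases) auto
  moreover have "last v \<noteq> (last v + n - 1) mod n" "0 \<noteq> n - 1"
    using v n is_address_butlast[of v n] by (auto simp: mod_if)
  ultimately show ?thesis
    unfolding vdegree_def edge_labels_at_vertex[OF assms] by (simp add: card_image)
qed

lemma G_edges_eq:
  assumes n: "n \<ge> 3"
  shows "G_edges n r = cycle_edge n ` edge_labels n r"
proof (induction r)
  case 0
  have "cycle_roots n 0 = {[]}" by (auto simp: cycle_roots_def is_address_def)
  then have "cycle_edge n ` edge_labels n 0 = (\<lambda>j. cycle_edge n ([], j)) ` {..<n}"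
    by (auto simp: edge_labels_def)
  moreover have "cycle_edge n ([], j) = {[j], [(j + 1) mod n]}" for j
    by (simp add: cycle_edge_def cycle_vertex_def)
  ultimately show ?case by simp
next
  case (Suc r)
  let ?D = "{v. is_address n v \<and> v \<noteq> [] \<and> length v = r + 1}"
  have "v \<in> \<Union> (G_edges n r) \<longleftrightarrow> is_address n v \<and> v \<noteq> [] \<and> length v \<le> r + 1" for v
    using vertex_of_cycle_edges_iff[OF n, of r v] Suc by auto
  then have D: "{v \<in> \<Union> (G_edges n r). vdegree (G_edges n r) v = 2} = ?D"
    using Suc vdegree_cycle_edges[OF n] by (auto split: if_splits)
  have "attach_cycle n v = cycle_edge n ` ({v} \<times> {..<n})" if "v \<noteq> []" for v
  proof -
    have "cycle_vertex v j = cyc_vertex v j" for j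
      using that by (simp add: cycle_vertex_def cyc_vertex_def)
    moreover have "cycle_edge n ` ({v} \<times> {..<n}) = (\<lambda>j. cycle_edge n (v, j)) ` {..<n}"
      by auto
    ultimately show ?thesis by (simp add: attach_cycle_def cycle_edge_def)
  qed
  then have "\<Union> (attach_cycle n ` ?D) = cycle_edge n ` (?D \<times> {..<n})"
    by auto
  moreover have "cycle_roots n (Suc r) = cycle_roots n r \<union> ?D"
    by (auto simp: cycle_roots_def)
  ultimately show ?case
    using D Suc by (auto simp: edge_labels_def)
qed

lemma finite_G_edges: "n \<ge> 3 \<Longrightarrow> finite (G_edges n r)"
  by (simp add: G_edges_eq finite_edge_labels)

lemma card_edge_G_edges: "n \<ge> 3 \<Longrightarrow> e \<in> G_edges n r \<Longrightarrow> card e = 2"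
  by (auto simp: G_edges_eq edge_labels_def card_cycle_edge)

lemma card_G_edges:
  assumes n: "n \<ge> 3"
  shows "card (G_edges n (Suc r)) = n * (1 + n * (\<Sum>i\<le>r. (n - 1) ^ i))"
proof -
  let ?S = "{s. set s \<subseteq> {1..<n} \<and> length s \<le> r}"
  have roots: "cycle_roots n (Suc r) = insert [] ((\<lambda>(a, s). a # s) ` ({..<n} \<times> ?S))"
  proof (rule set_eqI)
    fix u show "u \<in> cycle_roots n (Suc r) \<longleftrightarrow> u \<in> insert [] ((\<lambda>(a, s). a # s) ` ({..<n} \<times> ?S))"
      by (cases u) (auto simp: cycle_roots_def is_address_Cons is_address_def image_iff)
  qed
  have "inj_on (\<lambda>(a, s). a # s) ({..<n} \<times> ?S)" by (auto intro: inj_onI)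
  moreover have "card ?S = (\<Sum>i\<le>r. (n - 1) ^ i)"
    using card_lists_length_le[of "{1..<n}" r] by simp
  moreover have "finite ?S" by (rule finite_lists_length_le) simp
  moreover have "[] \<notin> (\<lambda>(a, s). a # s) ` ({..<n} \<times> ?S)" by auto
  ultimately have "card (cycle_roots n (Suc r)) = 1 + n * (\<Sum>i\<le>r. (n - 1) ^ i)"
    unfolding roots by (simp add: card_image card_cartesian_product)
  moreover have "inj_on (cycle_edge n) (edge_labels n (Suc r))"
    by (rule inj_on_subset[OF inj_on_cycle_edge[OF n]]) (auto simp: edge_labels_def)
  ultimately show ?thesis
    unfolding G_edges_eq[OF n] by (simp add: card_image edge_labels_def card_cartesian_product)
qed

lemma odd_sum_powers_even:
  fixes a :: nat
  assumes "even a"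
  shows "odd (\<Sum>i\<le>k. a ^ i)"
  using assms by (induction k) auto

lemma even_card_G_edges:
  assumes "odd n" "n \<ge> 3" "r \<ge> 1"
  shows "even (card (G_edges n r))"
proof -
  obtain r' where "r = Suc r'" using assms(3) by (cases r) auto
  moreover have "odd (\<Sum>i\<le>r'. (n - 1) ^ i)"
    using assms(1) by (intro odd_sum_powers_even) simp
  ultimately show ?thesis using card_G_edges[OF assms(2)] assms(1) by simp
qed

lemma real_card_G_edges:
  assumes "n \<ge> 3" "r \<ge> 1"
  shows "real (card (G_edges n r)) = real n + (real n)^2 * (((real n - 1)^r - 1) / (real n - 2))"
proof -
  obtain r' where r: "r = Suc r'" using assms(2) by (cases r) auto
  have "real (\<Sum>i\<le>r'. (n - 1) ^ i) = (\<Sum>i<r. (real n - 1) ^ i)"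
    using assms(1) by (simp add: r lessThan_Suc_atMost of_nat_diff)
  also have "\<dots> = ((real n - 1) ^ r - 1) / (real n - 2)"
    using assms(1) geometric_sum[of "real n - 1" r] by simp
  finally show ?thesis
    using card_G_edges[OF assms(1), of r'] by (simp add: r algebra_simps power2_eq_square)
qed

section \<open>Branches\<close>

text \<open>The branch at \<open>v\<close> consists of the cycles attached at \<open>v\<close> or beyond it; it meets
  the rest of the graph only in \<open>v\<close>.\<close>

definition descendant_roots :: "nat \<Rightarrow> nat \<Rightarrow> nat list \<Rightarrow> nat list set" where
  "descendant_roots n r v = {u \<in> cycle_roots n r. \<exists>s. u = v @ s}"

definition branch_edges :: "nat \<Rightarrow> nat \<Rightarrow> nat list \<Rightarrow> nat list set set" where
  "branch_edges n r v = cycle_edge n ` (descendant_roots n r v \<times> {..<n})"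

lemma card_descendant_roots:
  assumes "is_address n v" "v \<noteq> []" "length v \<le> r"
  shows "card (descendant_roots n r v) = (\<Sum>i\<le>r - length v. (n - 1) ^ i)"
proof -
  let ?S = "{s. set s \<subseteq> {1..<n} \<and> length s \<le> r - length v}"
  have "descendant_roots n r v = (\<lambda>s. v @ s) ` ?S"
    using assms by (auto simp: descendant_roots_def cycle_roots_def is_address_append)
  moreover have "inj_on (\<lambda>s. v @ s) ?S" by (auto intro: inj_onI)
  ultimately show ?thesis
    using card_lists_length_le[of "{1..<n}" "r - length v"] by (simp add: card_image)
qed

lemma odd_card_branch_edges:
  assumes n: "n \<ge> 3" "odd n" and v: "is_address n v" "v \<noteq> []" "length v \<le> r"
  shows "odd (card (branch_edges n r v))"
proof -
  have "inj_on (cycle_edge n) (descendant_roots n r v \<times> {..<n})"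
    by (rule inj_on_subset[OF inj_on_cycle_edge[OF n(1)]]) auto
  then have "card (branch_edges n r v) = card (descendant_roots n r v) * n"
    by (simp add: branch_edges_def card_image card_cartesian_product)
  moreover have "odd (\<Sum>i\<le>r - length v. (n - 1) ^ i)"
    using n(2) by (intro odd_sum_powers_even) simp
  ultimately show ?thesis using card_descendant_roots[OF v] n(2) by simp
qed

lemma branch_edges_subset: "branch_edges n r v \<subseteq> cycle_edge n ` edge_labels n r"
  by (auto simp: branch_edges_def edge_labels_def descendant_roots_def)

lemma vdegree_branch_edges_root:
  assumes n: "n \<ge> 3" and v: "is_address n v" "v \<noteq> []" "length v \<le> r"
  shows "vdegree (branch_edges n r v) v = 2"
proof -
  have "butlast v \<notin> descendant_roots n r v"
  proof
    assume "butlast v \<in> descendant_roots n r v"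
    then obtain s where "butlast v = v @ s" by (auto simp: descendant_roots_def)
    then have "length v \<le> length (butlast v)" by simp
    moreover have "length (butlast v) < length v" using v(2) by simp
    ultimately show False by linarith
  qed
  moreover have "v \<in> descendant_roots n r v"
    using v by (auto simp: descendant_roots_def cycle_roots_def)
  moreover have "descendant_roots n r v \<times> {..<n} \<subseteq> edge_labels n r"
    by (auto simp: descendant_roots_def edge_labels_def)
  ultimately have "{i \<in> descendant_roots n r v \<times> {..<n}. v \<in> cycle_edge n i}
      = {i \<in> edge_labels n r. v \<in> cycle_edge n i} \<inter> (descendant_roots n r v \<times> {..<n})"
    by blast
  also have "\<dots> = {(v, 0), (v, n - 1)}"
    using \<open>butlast v \<notin> descendant_roots n r v\<close> \<open>v \<in> descendant_roots n r v\<close> v(3) n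
    unfolding edge_labels_at_vertex[OF n v(1,2) trans_le_add1[OF v(3)]] by auto
  finally have "{i \<in> descendant_roots n r v \<times> {..<n}. v \<in> cycle_edge n i} = {(v, 0), (v, n - 1)}" .
  moreover have "{e \<in> branch_edges n r v. v \<in> e}
      = cycle_edge n ` {i \<in> descendant_roots n r v \<times> {..<n}. v \<in> cycle_edge n i}"
    unfolding branch_edges_def by blast
  ultimately have "{e \<in> branch_edges n r v. v \<in> e} = cycle_edge n ` {(v, 0), (v, n - 1)}"
    by simp
  moreover have "cycle_edge n (v, 0) \<noteq> cycle_edge n (v, n - 1)"
    using inj_onD[OF inj_on_cycle_edge[OF n], of "(v, 0)" "(v, n - 1)"] n by auto
  ultimately show ?thesis by (simp add: vdegree_def)
qed

lemma branch_edges_closed: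
  assumes n: "n \<ge> 3" and "x \<noteq> v" "e \<in> branch_edges n r v" "x \<in> e"
    and "e' \<in> cycle_edge n ` edge_labels n r" "x \<in> e'"
  shows "e' \<in> branch_edges n r v"
proof -
  have vertex: "\<exists>k<n. cycle_vertex u k = x" if "x \<in> cycle_edge n (u, j)" "j < n" for u j
  proof -
    from that(1) consider "x = cycle_vertex u j" | "x = cycle_vertex u ((j + 1) mod n)"
      by (auto simp: mem_cycle_edge)
    then show ?thesis
    proof cases
      case 1
      then show ?thesis using that(2) by blast
    next
      case 2
      then show ?thesis using n by (intro exI[of _ "(j + 1) mod n"]) simp
    qed
  qed
  obtain u s j where "u = v @ s" "j < n" "e = cycle_edge n (u, j)"
    using assms(3) by (auto simp: branch_edges_def descendant_roots_def)
  then obtain t where t: "x = v @ t" "t \<noteq> []"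
    using vertex[of u j] assms(2,4) by (auto simp: cycle_vertex_eq_iff)
  obtain u' j' where u': "u' \<in> cycle_roots n r" "j' < n" "e' = cycle_edge n (u', j')"
    using assms(5) by (auto simp: edge_labels_def)
  then obtain k where "cycle_vertex u' k = x"
    using vertex[of u' j'] assms(6) by blast
  then have "u' = x \<or> u' = butlast x"
    by (auto simp: cycle_vertex_eq_iff)
  then have "\<exists>s'. u' = v @ s'"
    using t by (auto simp: butlast_append)
  then show ?thesis
    using u' by (auto simp: branch_edges_def descendant_roots_def)
qed

lemma vdegree_diff_branch_edges:
  assumes n: "n \<ge> 3" and v: "is_address n v" "v \<noteq> []" "length v \<le> r"
    and XY: "X \<subseteq> G_edges n r" "Y \<subseteq> G_edges n r" "\<forall>x. vdegree X x = vdegree Y x"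
  shows "int (vdegree (X \<inter> branch_edges n r v) v) - int (vdegree (Y \<inter> branch_edges n r v) v)
    = 2 * int (card (X \<inter> branch_edges n r v)) - 2 * int (card (Y \<inter> branch_edges n r v))"
proof (rule vdegree_diff_on_branch)
  show "finite (G_edges n r)" "\<forall>e\<in>G_edges n r. card e = 2"
    using finite_G_edges card_edge_G_edges n by auto
qed (use XY branch_edges_closed[OF n] in \<open>auto simp: G_edges_eq[OF n]\<close>)

text \<open>At a cut vertex \<open>x\<close>, the branch at \<open>x\<close> has an odd number of edges, so degree counting
  inside it forces its two edges at \<open>x\<close> into the same class.\<close>

lemma branch_edges_root_same_class:
  assumes n: "n \<ge> 3" "odd n" and x: "is_address n x" "x \<noteq> []" "length x \<le> r"
    and PN: "P \<union> N = G_edges n r" "P \<inter> N = {}" "\<forall>x. vdegree P x = vdegree N x"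
  shows "vdegree (P \<inter> branch_edges n r x) x = 2 \<or> vdegree (N \<inter> branch_edges n r x) x = 2"
proof -
  let ?T = "branch_edges n r x"
  have fin: "finite (G_edges n r)" using finite_G_edges n(1) .
  have TE: "?T \<subseteq> G_edges n r" using branch_edges_subset G_edges_eq[OF n(1)] by blast
  have finT: "finite ?T" using finite_subset[OF TE fin] .
  have T: "(P \<inter> ?T) \<union> (N \<inter> ?T) = ?T" "(P \<inter> ?T) \<inter> (N \<inter> ?T) = {}"
    using PN(1,2) TE by blast+
  then have "odd (card (P \<inter> ?T) + card (N \<inter> ?T))"
    using odd_card_branch_edges[OF n x] finT by (simp flip: card_Un_disjoint)
  have "vdegree (P \<inter> ?T) x + vdegree (N \<inter> ?T) x = vdegree ?T x"
    using vdegree_Un_disjoint[of "P \<inter> ?T" "N \<inter> ?T" x] T finT by simp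
  then have two: "vdegree (P \<inter> ?T) x + vdegree (N \<inter> ?T) x = 2"
    using vdegree_branch_edges_root[OF n(1) x] by simp
  have diff: "int (vdegree (P \<inter> ?T) x) - int (vdegree (N \<inter> ?T) x)
      = 2 * int (card (P \<inter> ?T)) - 2 * int (card (N \<inter> ?T))"
    using vdegree_diff_branch_edges[OF n(1) x _ _ PN(3)] PN(1) by blast
  show ?thesis
  proof (rule ccontr)
    assume "\<not> ?thesis"
    then have "vdegree (P \<inter> ?T) x = vdegree (N \<inter> ?T) x" using two by linarith
    then have "card (P \<inter> ?T) = card (N \<inter> ?T)" using diff by simp
    then show False using \<open>odd (card (P \<inter> ?T) + card (N \<inter> ?T))\<close> by simp
  qed
qed

lemma branch_edges_at_vertex_one_class:
  assumes n: "n \<ge> 3" "odd n" and x: "is_address n x" "x \<noteq> []" "length x \<le> r"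
    and PN: "P \<union> N = G_edges n r" "P \<inter> N = {}" "\<forall>x. vdegree P x = vdegree N x"
  shows "{e \<in> branch_edges n r x. x \<in> e} = {e \<in> P. x \<in> e} \<or>
    {e \<in> branch_edges n r x. x \<in> e} = {e \<in> N. x \<in> e}"
proof -
  let ?T = "branch_edges n r x"
  have finPN: "finite P" "finite N" using finite_G_edges[OF n(1)] PN(1) by (metis finite_Un)+
  have finT: "finite ?T"
    using finite_subset[OF branch_edges_subset finite_edge_labels[THEN finite_imageI]] .
  have "2 * vdegree P x = vdegree (G_edges n r) x"
    using vdegree_Un_disjoint[OF finPN PN(2), of x] PN(1,3) by simp
  then have card: "card {e \<in> P. x \<in> e} = 2" "card {e \<in> N. x \<in> e} = 2"
    using PN(3) vdegree_cycle_edges[OF n(1) x(1,2)] x(3)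
    by (simp_all add: G_edges_eq[OF n(1)] vdegree_def)
  have fill: "{e \<in> ?T. x \<in> e} = {e \<in> X. x \<in> e}"
    if "finite X" "card {e \<in> X. x \<in> e} = 2" "vdegree (X \<inter> ?T) x = 2" for X
  proof -
    have "{e \<in> X \<inter> ?T. x \<in> e} = {e \<in> X. x \<in> e}"
      by (rule card_subset_eq) (use that in \<open>auto simp: vdegree_def\<close>)
    moreover have "{e \<in> X \<inter> ?T. x \<in> e} = {e \<in> ?T. x \<in> e}"
      by (rule card_subset_eq)
        (use that finT vdegree_branch_edges_root[OF n(1) x] in \<open>auto simp: vdegree_def\<close>)
    ultimately show ?thesis by simp
  qed
  show ?thesis
    using branch_edges_root_same_class[OF n x PN] fill[OF finPN(1) card(1)] fill[OF finPN(2) card(2)]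
    by blast
qed

section \<open>Primitivity of the Eulerian binomial\<close>

lemma even_vdegree_balanced_at_cut_vertex:
  assumes n: "n \<ge> 3" "odd n" and x: "is_address n x" "x \<noteq> []" "length x \<le> r"
    and PN: "P \<union> N = G_edges n r" "P \<inter> N = {}" "\<forall>x. vdegree P x = vdegree N x"
    and WZ: "W \<subseteq> P" "Z \<subseteq> N" "\<forall>x. vdegree W x = vdegree Z x"
  shows "even (vdegree W x)"
proof -
  let ?T = "branch_edges n r x"
  have "int (vdegree (W \<inter> ?T) x) - int (vdegree (Z \<inter> ?T) x)
      = 2 * int (card (W \<inter> ?T)) - 2 * int (card (Z \<inter> ?T))"
    using vdegree_diff_branch_edges[OF n(1) x _ _ WZ(3)] WZ(1,2) PN(1) by blast
  then have even: "even (vdegree (W \<inter> ?T) x + vdegree (Z \<inter> ?T) x)"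
    by presburger
  from branch_edges_at_vertex_one_class[OF n x PN]
  consider "{e \<in> ?T. x \<in> e} = {e \<in> P. x \<in> e}" | "{e \<in> ?T. x \<in> e} = {e \<in> N. x \<in> e}"
    by blast
  then show ?thesis
  proof cases
    case 1
    then have "{e \<in> W \<inter> ?T. x \<in> e} = {e \<in> W. x \<in> e}" "{e \<in> Z \<inter> ?T. x \<in> e} = {}"
      using WZ(1,2) PN(2) by blast+
    then have "vdegree (W \<inter> ?T) x = vdegree W x" "vdegree (Z \<inter> ?T) x = 0"
      unfolding vdegree_def by (simp_all only: card.empty)
    then show ?thesis using even by simp
  next
    case 2
    then have "{e \<in> W \<inter> ?T. x \<in> e} = {}" "{e \<in> Z \<inter> ?T. x \<in> e} = {e \<in> Z. x \<in> e}"
      using WZ(1,2) PN(2) by blast+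
    then have "vdegree (W \<inter> ?T) x = 0" "vdegree (Z \<inter> ?T) x = vdegree Z x"
      unfolding vdegree_def by (simp_all only: card.empty)
    then show ?thesis using even WZ(3) by simp
  qed
qed

lemma balanced_subset_all_or_none:
  assumes "finite A" "P \<union> N = A" "P \<inter> N = {}" "card P = card N"
    and "W \<subseteq> P" "Z \<subseteq> N" "card W = card Z" "card W = 0 \<or> card W = card P"
  shows "W \<union> Z = {} \<or> W \<union> Z = A"
proof -
  have fin: "finite P" "finite N" "finite W" "finite Z"
    using assms(1,2,5,6) finite_subset by blast+
  from assms(8) show ?thesis
  proof
    assume "card W = 0"
    then show ?thesis using fin assms(7) by simp
  next
    assume "card W = card P"
    then have "W = P" "Z = N"
      using card_subset_eq fin assms(4-7) by metis+
    then show ?thesis using assms(2) by simp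
  qed
qed

lemma vdegree_balanced_sub_zero_or_full:
  assumes n: "n \<ge> 3" "odd n"
    and PN: "P \<union> N = G_edges n r" "P \<inter> N = {}" "\<forall>x. vdegree P x = vdegree N x"
    and WZ: "W \<subseteq> P" "Z \<subseteq> N" "\<forall>x. vdegree W x = vdegree Z x"
  shows "vdegree W x = 0 \<or> vdegree W x = vdegree P x"
proof (cases "x \<in> \<Union> (G_edges n r)")
  case False
  then show ?thesis using WZ(1) PN(1) by (auto simp: vdegree_def card_eq_0_iff)
next
  case True
  then have x: "is_address n x" "x \<noteq> []" "length x \<le> r + 1"
    using vertex_of_cycle_edges_iff[OF n(1)] by (auto simp: G_edges_eq[OF n(1)])
  have finPN: "finite P" "finite N" using finite_G_edges[OF n(1)] PN(1) by (metis finite_Un)+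
  have le: "vdegree W x \<le> vdegree P x"
    unfolding vdegree_def using WZ(1) finPN(1) by (intro card_mono) auto
  have "2 * vdegree P x = vdegree (G_edges n r) x"
    using vdegree_Un_disjoint[OF finPN PN(2), of x] PN(1,3) by simp
  then have P: "vdegree P x = (if length x \<le> r then 2 else 1)"
    using vdegree_cycle_edges[OF n(1) x] by (simp add: G_edges_eq[OF n(1)] split: if_splits)
  show ?thesis
  proof (cases "length x \<le> r")
    case True
    then have "even (vdegree W x)"
      using even_vdegree_balanced_at_cut_vertex[OF n x(1,2) True PN WZ] by simp
    then show ?thesis using le P True by (auto elim!: oddE)
  next
    case False
    then show ?thesis using le P by auto
  qed
qed

lemma balanced_sub_all_or_none_at_vertex:
  assumes n: "n \<ge> 3" "odd n"
    and PN: "P \<union> N = G_edges n r" "P \<inter> N = {}" "\<forall>x. vdegree P x = vdegree N x"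
    and WZ: "W \<subseteq> P" "Z \<subseteq> N" "\<forall>x. vdegree W x = vdegree Z x"
  shows "{e \<in> W \<union> Z. x \<in> e} = {} \<or> {e \<in> W \<union> Z. x \<in> e} = {e \<in> G_edges n r. x \<in> e}"
proof -
  let ?A = "{e \<in> G_edges n r. x \<in> e}" and ?PA = "{e \<in> P. x \<in> e}" and ?NA = "{e \<in> N. x \<in> e}"
  have "{e \<in> W. x \<in> e} \<union> {e \<in> Z. x \<in> e} = {} \<or> {e \<in> W. x \<in> e} \<union> {e \<in> Z. x \<in> e} = ?A"
  proof (rule balanced_subset_all_or_none)
    show "finite ?A" using finite_G_edges[OF n(1)] by simp
    show "?PA \<union> ?NA = ?A" "?PA \<inter> ?NA = {}" using PN(1,2) by blast+
    show "{e \<in> W. x \<in> e} \<subseteq> ?PA" "{e \<in> Z. x \<in> e} \<subseteq> ?NA" using WZ(1,2) by blast+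
    show "card ?PA = card ?NA" "card {e \<in> W. x \<in> e} = card {e \<in> Z. x \<in> e}"
      "card {e \<in> W. x \<in> e} = 0 \<or> card {e \<in> W. x \<in> e} = card ?PA"
      using PN(3) WZ(3) vdegree_balanced_sub_zero_or_full[OF n PN WZ, of x] by (simp_all add: vdegree_def)
  qed
  moreover have "{e \<in> W \<union> Z. x \<in> e} = {e \<in> W. x \<in> e} \<union> {e \<in> Z. x \<in> e}" by blast
  ultimately show ?thesis by simp
qed

context
  fixes n r :: nat and S :: "nat list set set"
  assumes n: "n > 0"
    and respects_adjacency: "\<And>x e e'. e \<in> cycle_edge n ` edge_labels n r \<Longrightarrow>
      e' \<in> cycle_edge n ` edge_labels n r \<Longrightarrow> x \<in> e \<Longrightarrow> x \<in> e' \<Longrightarrow> e \<in> S \<longleftrightarrow> e' \<in> S"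
begin

lemma cycle_edge_mem_iff_first:
  assumes "u \<in> cycle_roots n r"
  shows "j < n \<Longrightarrow> cycle_edge n (u, j) \<in> S \<longleftrightarrow> cycle_edge n (u, 0) \<in> S"
proof (induction j)
  case (Suc j)
  have "cycle_vertex u (Suc j) \<in> cycle_edge n (u, j)" "cycle_vertex u (Suc j) \<in> cycle_edge n (u, Suc j)"
    using Suc.prems by (simp_all add: mem_cycle_edge)
  moreover have "cycle_edge n (u, j) \<in> cycle_edge n ` edge_labels n r"
    "cycle_edge n (u, Suc j) \<in> cycle_edge n ` edge_labels n r"
    using assms Suc.prems by (auto simp: edge_labels_def)
  ultimately show ?case using respects_adjacency Suc by (meson Suc_lessD)
qed simp

lemma cycle_edge_mem_iff_base:
  "u \<in> cycle_roots n r \<Longrightarrow> cycle_edge n (u, 0) \<in> S \<longleftrightarrow> cycle_edge n ([], 0) \<in> S"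
proof (induction "length u" arbitrary: u)
  case (Suc k)
  then have u: "u \<noteq> []" by auto
  have parent: "butlast u \<in> cycle_roots n r" "last u < n"
    using Suc.prems is_address_butlast[OF u, of n] by (auto simp: cycle_roots_def)
  have "cycle_vertex (butlast u) (last u) = u"
    using u is_address_butlast[OF u, of n] Suc.prems by (auto simp: cycle_vertex_def cycle_roots_def)
  then have "u \<in> cycle_edge n (u, 0)" "u \<in> cycle_edge n (butlast u, last u)"
    using u by (simp_all add: mem_cycle_edge cycle_vertex_def)
  moreover have "cycle_edge n (u, 0) \<in> cycle_edge n ` edge_labels n r"
    "cycle_edge n (butlast u, last u) \<in> cycle_edge n ` edge_labels n r"
    using Suc.prems parent n by (auto simp: edge_labels_def)
  ultimately have "cycle_edge n (u, 0) \<in> S \<longleftrightarrow> cycle_edge n (butlast u, last u) \<in> S"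
    using respects_adjacency by blast
  also have "\<dots> \<longleftrightarrow> cycle_edge n (butlast u, 0) \<in> S"
    using cycle_edge_mem_iff_first[OF parent] .
  also have "\<dots> \<longleftrightarrow> cycle_edge n ([], 0) \<in> S"
    using Suc parent(1) by simp
  finally show ?case .
qed simp

text \<open>This is the connectedness of \<open>G_r^n\<close>.\<close>

lemma edge_set_all_or_none:
  assumes "S \<subseteq> cycle_edge n ` edge_labels n r"
  shows "S = {} \<or> S = cycle_edge n ` edge_labels n r"
proof -
  have "cycle_edge n i \<in> S \<longleftrightarrow> cycle_edge n ([], 0) \<in> S" if "i \<in> edge_labels n r" for i
    using that cycle_edge_mem_iff_first cycle_edge_mem_iff_base by (auto simp: edge_labels_def)
  then show ?thesis using assms by blast
qed

end

lemma balanced_sub_trivial: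
  assumes n: "n \<ge> 3" "odd n"
    and PN: "P \<union> N = G_edges n r" "P \<inter> N = {}" "\<forall>x. vdegree P x = vdegree N x"
    and WZ: "W \<subseteq> P" "Z \<subseteq> N" "\<forall>x. vdegree W x = vdegree Z x"
  shows "W \<union> Z = {} \<or> W \<union> Z = G_edges n r"
proof -
  note E = G_edges_eq[OF n(1)]
  have sub: "W \<union> Z \<subseteq> cycle_edge n ` edge_labels n r"
    using PN(1) WZ(1,2) unfolding E by blast
  have adjacent: "e \<in> W \<union> Z \<longleftrightarrow> e' \<in> W \<union> Z"
    if "e \<in> cycle_edge n ` edge_labels n r" "e' \<in> cycle_edge n ` edge_labels n r" "x \<in> e" "x \<in> e'"
    for x e e'
    using balanced_sub_all_or_none_at_vertex[OF n PN WZ, of x] that unfolding E by blast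
  have "0 < n" using n(1) by simp
  from edge_set_all_or_none[OF this adjacent sub] show ?thesis unfolding E .
qed

theorem proposition4p1:
  fixes n r :: nat and w :: "nat list list"
  assumes "odd n" and "n \<ge> 3" and "r \<ge> 1"
    and "closed_eulerian_trail (G_edges n r) w"
  shows "primitive_binomial (G_edges n r) (Bw_pos w) (Bw_neg w)
     \<and> real (binomial_degree w)
         = (1/2) * (real n + (real n)^2 * (((real n - 1)^r - 1) / (real n - 2)))"
proof -
  let ?E = "G_edges n r" and ?P = "alternate_edges w True" and ?N = "alternate_edges w False"
  have trail: "w \<noteq> []" "distinct (walk_edges w)" "set (walk_edges w) = ?E"
    using assms(4) by (auto simp: closed_eulerian_trail_def)
  then have length: "length w = card ?E" by (metis distinct_card length_walk_edges)
  have even: "even (length w)" using even_card_G_edges assms(1-3) length by simp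
  have PN: "?P \<union> ?N = ?E" "?P \<inter> ?N = {}" "\<forall>x. vdegree ?P x = vdegree ?N x"
    using alternate_edges_Un[of w] alternate_edges_disjoint[OF trail(2)]
      vdegree_alternate_edges_eq[OF trail(2) even] card_edge_G_edges[OF assms(2)] trail(3)
    by simp_all
  have "?P \<noteq> {}" using trail(1) unfolding alternate_edges_def by auto
  have "primitive_binomial ?E (mset_set ?P) (mset_set ?N)"
    by (rule primitive_binomial_mset_setI[OF finite_G_edges[OF assms(2)] PN(1,2) \<open>?P \<noteq> {}\<close> PN(3)])
      (rule balanced_sub_trivial[OF assms(2,1) PN])
  moreover have "binomial_degree w = card ?E div 2"
    using binomial_degree_eq[of w] even length by simp
  then have "real (binomial_degree w) = real (card ?E) / 2"
    using even length by (simp add: real_of_nat_div)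
  ultimately show ?thesis
    using Bw_pos_eq[OF trail(2)] Bw_neg_eq[OF trail(2)] real_card_G_edges[OF assms(2,3)] by simp
qed

end
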